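(* For any positive integer $n$ and any $m\in\mathbb{Z}$, \[ \sum_{l=0}^n\big(q^{-nm}z^{n-l}-z^l\big)\prod_{i=1}^l\frac{(q^m-z^i)(1-z^{n-i+1})}{(1-q^mz^{n-i+1})(1-z^i)}=0, \] as an identity of rational functions in $z$ and $q$.
   Context: The empty product (for $l=0$) equals $1$. *)

theory Defs
  imports Complex_Main
begin

end

theory Submission
  imports Defs
begin

(* With a = q^m, the l-th product equals a^l [n l]_z (z/a; z)_l (az; z)_(n-l) / (az; z)_n,
   where [n l]_z is the Gaussian binomial coefficient and (b; z)_k the q-Pochhammer symbol.
   Multiplied by q^(-nm) z^(n-l) resp. z^l, the two halves of the sum become the two forms
   of the q-Chu-Vandermonde sum for alpha = z/a and beta = az, which both equal
   (alpha beta; z)_n / (az; z)_n and therefore cancel. *)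

definition qpoch :: "'a::comm_ring_1 \<Rightarrow> 'a \<Rightarrow> nat \<Rightarrow> 'a" where
  "qpoch b x k = (\<Prod>j<k. 1 - b * x ^ j)"

lemma qpoch_0 [simp]: "qpoch b x 0 = 1"
  by (simp add: qpoch_def)

lemma qpoch_Suc [simp]: "qpoch b x (Suc k) = qpoch b x k * (1 - b * x ^ k)"
  by (simp add: qpoch_def)

lemma qpoch_eq_0_iff: "qpoch b x k = (0::'a::idom) \<longleftrightarrow> (\<exists>j<k. b * x ^ j = 1)"
  by (auto simp: qpoch_def prod_zero_iff)

lemma qpoch_split:
  assumes "l \<le> n"
  shows "qpoch b x n = qpoch b x (n - l) * (\<Prod>i=1..l. 1 - b * x ^ (n - i))"
  using assms
proof (induction l)
  case (Suc l)
  then have "n - l = Suc (n - Suc l)" by simp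
  with Suc show ?case by (simp add: algebra_simps)
qed simp

lemma prod_diff_powers_eq_qpoch:
  fixes a x :: "'a::field"
  assumes "a \<noteq> 0"
  shows "(\<Prod>i=1..l. a - x ^ i) = a ^ l * qpoch (x / a) x l"
  using assms by (induction l) (simp_all add: field_simps)

fun qbinomial :: "'a::comm_ring_1 \<Rightarrow> nat \<Rightarrow> nat \<Rightarrow> 'a" where
  "qbinomial x n 0 = 1"
| "qbinomial x 0 (Suc k) = 0"
| "qbinomial x (Suc n) (Suc k) = qbinomial x n k + x ^ Suc k * qbinomial x n (Suc k)"

lemma qbinomial_eq_0: "n < k \<Longrightarrow> qbinomial x n k = 0"
  by (induction x n k rule: qbinomial.induct) auto

lemma qbinomial_self [simp]: "qbinomial x n n = 1"
  by (induction n) (simp_all add: qbinomial_eq_0)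

lemma qbinomial_Suc_Suc':
  "qbinomial x (Suc n) (Suc k) = qbinomial x n (Suc k) + x ^ (n - k) * qbinomial x n k"
proof (induction n arbitrary: k)
  case 0
  then show ?case by (cases k) simp_all
next
  case (Suc n)
  show ?case
  proof (cases k)
    case 0
    with Suc.IH[of 0] show ?thesis by (simp add: algebra_simps)
  next
    case (Suc k')
    have shift: "x ^ Suc (Suc k') * (x ^ (n - Suc k') * qbinomial x n (Suc k'))
        = x ^ (n - k') * (x ^ Suc k' * qbinomial x n (Suc k'))"
    proof (cases "k' < n")
      case True
      then have "Suc (Suc k') + (n - Suc k') = (n - k') + Suc k'" by simp
      then show ?thesis by (metis mult.assoc power_add)
    qed (simp add: qbinomial_eq_0)
    have "qbinomial x (Suc (Suc n)) (Suc (Suc k'))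
        = qbinomial x (Suc n) (Suc k') + x ^ Suc (Suc k') * qbinomial x (Suc n) (Suc (Suc k'))"
      by (simp only: qbinomial.simps)
    also have "\<dots> = qbinomial x n (Suc k') + x ^ (n - k') * qbinomial x n k'
        + x ^ Suc (Suc k') * (qbinomial x n (Suc (Suc k')) + x ^ (n - Suc k') * qbinomial x n (Suc k'))"
      by (simp only: Suc.IH)
    also have "\<dots> = qbinomial x (Suc n) (Suc (Suc k')) + x ^ (Suc n - Suc k') * qbinomial x (Suc n) (Suc k')"
      using shift by (simp only: qbinomial.simps diff_Suc_Suc) (simp add: algebra_simps)
    finally show ?thesis by (simp only: Suc)
  qed
qed

lemma qbinomial_symmetric:
  assumes "k \<le> n"
  shows "qbinomial x n (n - k) = qbinomial x n k"
  using assms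
proof (induction n arbitrary: k)
  case (Suc n)
  show ?case
  proof (cases k)
    case (Suc k')
    show ?thesis
    proof (cases "k' = n")
      case False
      with Suc.prems Suc have k': "k' < n" by simp
      then have diff: "n - k' = Suc (n - Suc k')" by simp
      have "qbinomial x (Suc n) (n - k') = qbinomial x (Suc n) (Suc (n - Suc k'))"
        by (simp only: diff)
      also have "\<dots> = qbinomial x n (n - k') + x ^ Suc k' * qbinomial x n (n - Suc k')"
        using k' by (simp only: qbinomial_Suc_Suc' diff) (simp add: diff_diff_right)
      also have "\<dots> = qbinomial x (Suc n) (Suc k')"
        using k' Suc.IH[of k'] Suc.IH[of "Suc k'"] by simp
      finally show ?thesis by (simp add: Suc)
    qed (simp add: Suc)
  qed simp
qed simp

lemma qbinomial_mult_qpoch: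
  assumes "k \<le> n"
  shows "qbinomial x n k * qpoch x x k * qpoch x x (n - k) = qpoch x x n"
  using assms
proof (induction n arbitrary: k)
  case (Suc n)
  show ?case
  proof (cases k)
    case (Suc k')
    have first: "qbinomial x n k' * qpoch x x (Suc k') * qpoch x x (n - k') = qpoch x x n * (1 - x ^ Suc k')"
      using Suc.IH[of k'] Suc.prems Suc by (simp add: algebra_simps)
    have second: "x ^ Suc k' * qbinomial x n (Suc k') * qpoch x x (Suc k') * qpoch x x (n - k')
        = qpoch x x n * (x ^ Suc k' - x ^ Suc n)"
    proof (cases "k' < n")
      case True
      define r where "r = n - Suc k'"
      have r: "n - k' = Suc r" "x ^ Suc k' * (x * x ^ r) = x ^ Suc n"
        using True by (simp_all add: r_def flip: power_add power_Suc)
      have "x ^ Suc k' * qbinomial x n (Suc k') * qpoch x x (Suc k') * qpoch x x (n - k')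
          = x ^ Suc k' * (qbinomial x n (Suc k') * qpoch x x (Suc k') * qpoch x x r) * (1 - x * x ^ r)"
        by (simp add: r)
      also have "\<dots> = qpoch x x n * (x ^ Suc k' - x ^ Suc k' * (x * x ^ r))"
        unfolding r_def using Suc.IH[of "Suc k'"] True by (simp only: Suc_le_eq) (simp add: algebra_simps)
      finally show ?thesis by (simp only: r)
    qed (use Suc.prems Suc in \<open>simp add: qbinomial_eq_0\<close>)
    have "qbinomial x (Suc n) k * qpoch x x k * qpoch x x (Suc n - k)
        = qbinomial x n k' * qpoch x x (Suc k') * qpoch x x (n - k')
          + x ^ Suc k' * qbinomial x n (Suc k') * qpoch x x (Suc k') * qpoch x x (n - k')"
      by (simp only: Suc qbinomial.simps diff_Suc_Suc distrib_right mult.assoc)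
    also have "\<dots> = qpoch x x (Suc n)"
      by (simp only: first second) (simp add: algebra_simps)
    finally show ?thesis .
  qed simp
qed simp

lemma qvandermonde:
  "(\<Sum>k\<le>n. qbinomial x n k * qpoch a x k * qpoch b x (n - k) * a ^ (n - k)) = qpoch (a * b) x n"
proof (induction n)
  case (Suc n)
  define f where "f k = qpoch a x k * qpoch b x (Suc n - k) * a ^ (Suc n - k)" for k
  have "(\<Sum>k\<le>Suc n. qbinomial x (Suc n) k * qpoch a x k * qpoch b x (Suc n - k) * a ^ (Suc n - k))
      = (\<Sum>k\<le>Suc n. qbinomial x (Suc n) k * f k)"
    by (simp add: f_def mult.assoc)
  also have "\<dots> = f 0 + (\<Sum>k\<le>n. (qbinomial x n k + x ^ Suc k * qbinomial x n (Suc k)) * f (Suc k))"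
    by (subst sum.atMost_Suc_shift) simp
  also have "\<dots> = (\<Sum>k\<le>n. qbinomial x n k * f (Suc k))
      + (f 0 + (\<Sum>k\<le>n. x ^ Suc k * qbinomial x n (Suc k) * f (Suc k)))"
    by (simp add: algebra_simps sum.distrib)
  also have "f 0 + (\<Sum>k\<le>n. x ^ Suc k * qbinomial x n (Suc k) * f (Suc k))
      = (\<Sum>k\<le>Suc n. x ^ k * qbinomial x n k * f k)"
    by (subst sum.atMost_Suc_shift) simp
  also have "\<dots> = (\<Sum>k\<le>n. x ^ k * qbinomial x n k * f k)"
    by (simp add: qbinomial_eq_0)
  also have "(\<Sum>k\<le>n. qbinomial x n k * f (Suc k)) + (\<Sum>k\<le>n. x ^ k * qbinomial x n k * f k)
      = (\<Sum>k\<le>n. (1 - a * b * x ^ n) * (qbinomial x n k * qpoch a x k * qpoch b x (n - k) * a ^ (n - k)))"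
    unfolding sum.distrib[symmetric]
  proof (rule sum.cong)
    fix k assume "k \<in> {..n}"
    then have diff: "Suc n - k = Suc (n - k)" and power: "x ^ n = x ^ k * x ^ (n - k)"
      by (simp_all flip: power_add)
    then show "qbinomial x n k * f (Suc k) + x ^ k * qbinomial x n k * f k
        = (1 - a * b * x ^ n) * (qbinomial x n k * qpoch a x k * qpoch b x (n - k) * a ^ (n - k))"
      unfolding f_def diff by (subst power) (simp add: algebra_simps)
  qed simp
  also have "\<dots> = qpoch (a * b) x (Suc n)"
    by (simp add: Suc.IH flip: sum_distrib_left)
  finally show ?case .
qed simp

lemma qvandermonde':
  "(\<Sum>k\<le>n. qbinomial x n k * qpoch a x k * qpoch b x (n - k) * b ^ k) = qpoch (a * b) x n"
proof -
  have "qpoch (a * b) x n = (\<Sum>k=0..n. qbinomial x n k * qpoch b x k * qpoch a x (n - k) * b ^ (n - k))"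
    using qvandermonde[of x n b a] by (simp add: atMost_atLeast0 mult.commute)
  also have "\<dots> = (\<Sum>k=0..n. qbinomial x n (n - k) * qpoch b x (n - k) * qpoch a x k * b ^ k)"
    by (subst sum.atLeastAtMost_rev) (auto intro!: sum.cong)
  also have "\<dots> = (\<Sum>k\<le>n. qbinomial x n k * qpoch a x k * qpoch b x (n - k) * b ^ k)"
    by (auto simp: atMost_atLeast0 qbinomial_symmetric intro!: sum.cong)
  finally show ?thesis ..
qed

lemma prod_ratio_eq_qbinomial:
  fixes a x :: "'a::field"
  assumes "a \<noteq> 0" "l \<le> n" "qpoch x x n \<noteq> 0" "qpoch (a * x) x n \<noteq> 0"
  shows "(\<Prod>i=1..l. ((a - x ^ i) * (1 - x ^ (n - i + 1))) / ((1 - a * x ^ (n - i + 1)) * (1 - x ^ i)))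
    = a ^ l * qbinomial x n l * qpoch (x / a) x l * qpoch (a * x) x (n - l) / qpoch (a * x) x n"
proof -
  have top_x: "qpoch x x n = qpoch x x (n - l) * (\<Prod>i=1..l. 1 - x ^ (n - i + 1))"
    using qpoch_split[OF \<open>l \<le> n\<close>, of x x] by simp
  have top_ax: "qpoch (a * x) x n = qpoch (a * x) x (n - l) * (\<Prod>i=1..l. 1 - a * x ^ (n - i + 1))"
    using qpoch_split[OF \<open>l \<le> n\<close>, of "a * x" x] by (simp add: mult.assoc)
  have bottom_x: "(\<Prod>i=1..l. 1 - x ^ i) = qpoch x x l"
    using prod_diff_powers_eq_qpoch[of 1 x l] by simp
  have binom: "qbinomial x n l * qpoch x x l * qpoch x x (n - l) = qpoch x x n"
    using qbinomial_mult_qpoch[OF \<open>l \<le> n\<close>] .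
  have nonzero: "qpoch x x l \<noteq> 0" "qpoch x x (n - l) \<noteq> 0" "qpoch (a * x) x (n - l) \<noteq> 0"
    using assms(3,4) binom top_ax by auto
  have "(\<Prod>i=1..l. ((a - x ^ i) * (1 - x ^ (n - i + 1))) / ((1 - a * x ^ (n - i + 1)) * (1 - x ^ i)))
      = (\<Prod>i=1..l. a - x ^ i) * (\<Prod>i=1..l. 1 - x ^ (n - i + 1))
        / ((\<Prod>i=1..l. 1 - a * x ^ (n - i + 1)) * (\<Prod>i=1..l. 1 - x ^ i))"
    by (simp only: prod_dividef prod.distrib)
  also have "\<dots> = a ^ l * qpoch (x / a) x l * (qpoch x x n / qpoch x x (n - l))
        / ((qpoch (a * x) x n / qpoch (a * x) x (n - l)) * qpoch x x l)"
    using nonzero by (simp only: top_x top_ax bottom_x prod_diff_powers_eq_qpoch[OF \<open>a \<noteq> 0\<close>])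
      (simp add: field_simps)
  also have "\<dots> = a ^ l * qbinomial x n l * qpoch (x / a) x l * qpoch (a * x) x (n - l) / qpoch (a * x) x n"
    using nonzero assms(4) by (simp add: binom[symmetric] field_simps)
  finally show ?thesis .
qed

lemma sum_prod_ratio_eq_0:
  fixes a x :: "'a::field"
  assumes "a \<noteq> 0" "qpoch x x n \<noteq> 0" "qpoch (a * x) x n \<noteq> 0"
  shows "(\<Sum>l=0..n. (inverse (a ^ n) * x ^ (n - l) - x ^ l) *
            (\<Prod>i=1..l. ((a - x ^ i) * (1 - x ^ (n - i + 1))) / ((1 - a * x ^ (n - i + 1)) * (1 - x ^ i)))) = 0"
proof -
  define T where "T l = qbinomial x n l * qpoch (x / a) x l * qpoch (a * x) x (n - l)" for l
  have "(inverse (a ^ n) * x ^ (n - l) - x ^ l) *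
      (\<Prod>i=1..l. ((a - x ^ i) * (1 - x ^ (n - i + 1))) / ((1 - a * x ^ (n - i + 1)) * (1 - x ^ i)))
    = T l * (x / a) ^ (n - l) / qpoch (a * x) x n - T l * (a * x) ^ l / qpoch (a * x) x n"
    if "l \<le> n" for l
  proof -
    have "a ^ n = a ^ (n - l) * a ^ l"
      using that by (simp flip: power_add)
    then have "inverse (a ^ n) * x ^ (n - l) * a ^ l = (x / a) ^ (n - l)"
      using assms(1) by (simp add: field_simps power_divide)
    then show ?thesis
      using prod_ratio_eq_qbinomial[OF assms(1) that assms(2,3)]
      by (simp add: T_def power_mult_distrib algebra_simps diff_divide_distrib)
  qed
  then have "(\<Sum>l=0..n. (inverse (a ^ n) * x ^ (n - l) - x ^ l) *
            (\<Prod>i=1..l. ((a - x ^ i) * (1 - x ^ (n - i + 1))) / ((1 - a * x ^ (n - i + 1)) * (1 - x ^ i))))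
    = (\<Sum>l\<le>n. T l * (x / a) ^ (n - l)) / qpoch (a * x) x n - (\<Sum>l\<le>n. T l * (a * x) ^ l) / qpoch (a * x) x n"
    by (simp add: atMost_atLeast0 sum_subtractf sum_divide_distrib)
  also have "\<dots> = 0"
    unfolding T_def qvandermonde qvandermonde' by simp
  finally show ?thesis .
qed

theorem corollary3p4:
  fixes z q :: complex and n :: nat and m :: int
  assumes "n > 0"
    and "q \<noteq> 0"
    and "\<forall>i\<in>{1..n}. z ^ i \<noteq> 1"
    and "\<forall>i\<in>{1..n}. q powi m * z ^ (n - i + 1) \<noteq> 1"
  shows "(\<Sum>l = 0..n. (q powi (- (int n * m)) * z ^ (n - l) - z ^ l) *
            (\<Prod>i = 1..l. ((q powi m - z ^ i) * (1 - z ^ (n - i + 1))) /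
                            ((1 - q powi m * z ^ (n - i + 1)) * (1 - z ^ i)))) = 0"
proof -
  define a where "a = q powi m"
  have "a \<noteq> 0"
    using assms(2) by (simp add: a_def)
  have "q powi (- (int n * m)) = inverse (a ^ n)"
    by (simp add: a_def power_int_minus mult.commute power_int_mult)
  moreover have "qpoch z z n \<noteq> 0"
  proof -
    have "z * z ^ j \<noteq> 1" if "j < n" for j
      using assms(3) that by (metis Suc_leI atLeastAtMost_iff le_add1 plus_1_eq_Suc power_Suc)
    then show ?thesis by (simp add: qpoch_eq_0_iff)
  qed
  moreover have "qpoch (a * z) z n \<noteq> 0"
  proof -
    have "a * z * z ^ j \<noteq> 1" if "j < n" for j
      using assms(4)[rule_format, of "n - j"] that by (simp add: a_def Suc_diff_Suc mult.assoc)
    then show ?thesis by (simp add: qpoch_eq_0_iff)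
  qed
  ultimately show ?thesis
    using sum_prod_ratio_eq_0[OF \<open>a \<noteq> 0\<close>] by (simp add: a_def)
qed

end
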